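(* Consider the \texttt{Ghost} algorithm described in the context and assume (A1), (A2), (A4). Then for all $k\ge1$, $$\mathbb{E}\big[\|w_k-\widehat w_k\|^2\,\big|\,\widehat w_{k-1}\big]\le\gamma^2\omega_{\mathrm{dwn}}\Big(1+\frac{\omega_{\mathrm{up}}}{N}\Big)\|\nabla F(\widehat w_{k-1})\|^2+\frac{\gamma^2\omega_{\mathrm{dwn}}(1+\omega_{\mathrm{up}})\sigma^2}{Nb}.$$
   Context: $N\ge1$ homogeneous workers, objective $F:\mathbb{R}^d\to\mathbb{R}$. Worker $i$ at iteration $k$ has an oracle $g_k^i$ (mini-batch $b$) with $\mathbb{E}[g_k^i(w)]=\nabla F(w)$; $\widehat g_k^i(w)=\mathcal{C}_{\mathrm{up}}(g_k^i(w))$ denotes its uplink-compressed version. All compressions and oracle calls use fresh independent randomness. \texttt{Ghost} algorithm with step size $\gamma$: $\widehat w_0=w_0$ and for $k\ge0$: $w_{k+1}=w_k-\gamma\frac1N\sum_{i=1}^N\widehat g_{k+1}^i(\widehat w_k)$ and $\widehat w_{k+1}=w_k-\gamma\,\mathcal{C}_{\mathrm{dwn}}\big(\frac1N\sum_{i=1}^N\widehat g^i_{k+1}(\widehat w_k)\big)$, where the vector $\frac1N\sum_i\widehat g^i_{k+1}(\widehat w_k)$ is the same in both lines. $\mathbb{E}[\cdot\mid\widehat w_{k-1}]$ is the conditional expectation given all randomness up to the computation of $\widehat w_{k-1}$. (A1) for some $\omega_{\mathrm{up}},\omega_{\mathrm{dwn}}>0$ and all $w$: $\mathbb{E}[\mathcal{C}_{\mathrm{up/dwn}}(w)]=w$,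 $\mathbb{E}\|\mathcal{C}_{\mathrm{up/dwn}}(w)-w\|^2\le\omega_{\mathrm{up/dwn}}\|w\|^2$. (A2) $F$ twice continuously differentiable and $L$-smooth. (A4) $\mathbb{E}\|g_k^i(w)-\nabla F(w)\|^2\le\sigma^2/b$ for all $k,i,w$. *)

theory Defs
  imports "HOL-Probability.Probability"
begin

text \<open>Distributions are Markov kernels on Borel sets:
  \<open>g k i w\<close> is the law of the oracle output g_k^i(w);
  \<open>Cup x\<close>, \<open>Cdwn x\<close> are the laws of the compressed vectors C_up(x), C_dwn(x).
  All randomness used in iteration k is fresh, hence independent of everything
  up to hat w_(k-1); conditioning on hat w_(k-1) therefore amounts to fixing
  its value w and integrating over the fresh randomness of iteration k.\<close>

definition unbiased_compressor :: "('a::euclidean_space \<Rightarrow> 'a measure) \<Rightarrow> real \<Rightarrow> bool" where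
  "unbiased_compressor C \<omega> \<longleftrightarrow>
     C \<in> borel \<rightarrow>\<^sub>M prob_algebra borel \<and>
     (\<forall>x. integrable (C x) (\<lambda>y. y) \<and> integral\<^sup>L (C x) (\<lambda>y. y) = x \<and>
          integrable (C x) (\<lambda>y. (norm (y - x))\<^sup>2) \<and>
          (\<integral>y. (norm (y - x))\<^sup>2 \<partial>C x) \<le> \<omega> * (norm x)\<^sup>2)"

definition avg :: "nat \<Rightarrow> (nat \<Rightarrow> 'a::euclidean_space) \<Rightarrow> 'a" where
  "avg N ys = (1 / real N) *\<^sub>R (\<Sum>i<N. ys i)"

definition uplink_law :: "nat \<Rightarrow> (nat \<Rightarrow> nat \<Rightarrow> 'a \<Rightarrow> 'a measure) \<Rightarrow> ('a \<Rightarrow> 'a measure)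
    \<Rightarrow> nat \<Rightarrow> 'a::euclidean_space \<Rightarrow> (nat \<Rightarrow> 'a) measure" where
  "uplink_law N g Cup k w = (\<Pi>\<^sub>M i\<in>{..<N}. (g k i w \<bind> Cup))"

text \<open>E[ ||w_k - hat w_k||^2 | hat w_(k-1) ] evaluated at hat w_(k-1) = w:
  w_k - hat w_k = gamma (C_dwn(v) - v) with v = (1/N) sum_i hat g_k^i(hat w_(k-1)).\<close>
definition ghost_cond_err :: "real \<Rightarrow> nat \<Rightarrow> (nat \<Rightarrow> nat \<Rightarrow> 'a \<Rightarrow> 'a measure) \<Rightarrow> ('a \<Rightarrow> 'a measure)
    \<Rightarrow> ('a \<Rightarrow> 'a measure) \<Rightarrow> nat \<Rightarrow> 'a::euclidean_space \<Rightarrow> real" where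
  "ghost_cond_err \<gamma> N g Cup Cdwn k w =
     (\<integral>ys. (\<integral>z. (norm (\<gamma> *\<^sub>R (z - avg N ys)))\<^sup>2 \<partial>Cdwn (avg N ys)) \<partial>uplink_law N g Cup k w)"

end

theory Submission
  imports Defs
begin

text \<open>Given \<open>hat w_(k-1) = w\<close>, the downlink error is \<open>\<gamma> (C_dwn(v) - v)\<close> for the averaged
  uplink message \<open>v\<close>, so by (A1) its second moment is at most \<open>\<gamma>\<^sup>2 \<omega>_dwn E\<parallel>v\<parallel>\<^sup>2\<close>.
  Each compressed oracle output is unbiased for \<open>\<nabla>F(w)\<close> and, by (A1) and the bias-variance
  decomposition, has second moment at most \<open>(1 + \<omega>_up)(\<parallel>\<nabla>F(w)\<parallel>\<^sup>2 + \<sigma>\<^sup>2/b)\<close>. As the workers are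
  independent, \<open>E\<parallel>\<Sum>\<^sub>i Y\<^sub>i\<parallel>\<^sup>2 = \<parallel>\<Sum>\<^sub>i E Y\<^sub>i\<parallel>\<^sup>2 + \<Sum>\<^sub>i Var Y\<^sub>i\<close>, which gives the bound.\<close>

lemma integral_bind_nonneg:
  fixes h :: "'b \<Rightarrow> real"
  assumes h[measurable]: "h \<in> borel_measurable K" and h_nonneg: "\<And>y. 0 \<le> h y"
    and N[measurable]: "N \<in> M \<rightarrow>\<^sub>M subprob_algebra K"
    and M_nonempty: "space M \<noteq> {}"
    and h_int: "integrable (M \<bind> N) h"
  shows "integrable M (\<lambda>x. integral\<^sup>L (N x) h)"
    and "integral\<^sup>L (M \<bind> N) h = (\<integral>x. integral\<^sup>L (N x) h \<partial>M)"
    and "AE x in M. integrable (N x) h"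
proof -
  have sets_N: "sets (N x) = sets K" if "x \<in> space M" for x
    using N that by (rule subprob_measurableD(2))
  have h_N: "h \<in> borel_measurable (N x)" if "x \<in> space M" for x
    using h by (simp add: measurable_cong_sets[OF sets_N[OF that] refl])
  have h_bind: "h \<in> borel_measurable (M \<bind> N)"
    using h by (simp add: measurable_cong_sets[OF sets_bind[OF sets_N M_nonempty] refl])
  have inner_eq: "integral\<^sup>L (N x) h = enn2real (\<integral>\<^sup>+y. h y \<partial>N x)" if "x \<in> space M" for x
    using h_N[OF that] h_nonneg by (intro integral_eq_nn_integral) auto
  have nn_bind: "(\<integral>\<^sup>+y. h y \<partial>(M \<bind> N)) = (\<integral>\<^sup>+x. \<integral>\<^sup>+y. h y \<partial>N x \<partial>M)"
    by (rule nn_integral_bind[OF _ N]) measurable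
  have finite: "(\<integral>\<^sup>+y. h y \<partial>(M \<bind> N)) < \<infinity>"
    using h_int h_nonneg by (auto simp: integrable_iff_bounded)
  have AE_finite: "AE x in M. (\<integral>\<^sup>+y. h y \<partial>N x) \<noteq> \<infinity>"
    using finite nn_bind by (intro nn_integral_PInf_AE) auto
  have nn_outer: "(\<integral>\<^sup>+x. ennreal (integral\<^sup>L (N x) h) \<partial>M) = (\<integral>\<^sup>+x. \<integral>\<^sup>+y. h y \<partial>N x \<partial>M)"
    using AE_finite by (intro nn_integral_cong_AE) (auto simp: inner_eq less_top)
  have inner_measurable: "(\<lambda>x. integral\<^sup>L (N x) h) \<in> borel_measurable M"
    by measurable
  show "integrable M (\<lambda>x. integral\<^sup>L (N x) h)"
    using inner_measurable nn_outer nn_bind finite by (intro integrableI_nonneg) (auto simp: inner_eq)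
  show "integral\<^sup>L (M \<bind> N) h = (\<integral>x. integral\<^sup>L (N x) h \<partial>M)"
    using inner_measurable nn_outer nn_bind h_bind h_nonneg
    by (subst (1 2) integral_eq_nn_integral) (auto simp: inner_eq)
  show "AE x in M. integrable (N x) h"
    using AE_finite AE_space
  proof eventually_elim
    case (elim x)
    then show ?case
      using h_N h_nonneg by (intro integrableI_nonneg) (auto simp: less_top)
  qed
qed

lemma integral_bind:
  fixes f :: "'b \<Rightarrow> real"
  assumes f[measurable]: "f \<in> borel_measurable K"
    and N[measurable]: "N \<in> M \<rightarrow>\<^sub>M subprob_algebra K"
    and M_nonempty: "space M \<noteq> {}"
    and f_int: "integrable (M \<bind> N) f"
  shows "integral\<^sup>L (M \<bind> N) f = (\<integral>x. integral\<^sup>L (N x) f \<partial>M)"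
proof -
  define p where "p y = max (f y) 0" for y
  define q where "q y = max (- f y) 0" for y
  have p_meas[measurable]: "p \<in> borel_measurable K" and q_meas[measurable]: "q \<in> borel_measurable K"
    unfolding p_def q_def by measurable
  have f_eq: "f = (\<lambda>y. p y - q y)"
    by (auto simp: p_def q_def)
  have p_nonneg: "\<And>y. 0 \<le> p y" and q_nonneg: "\<And>y. 0 \<le> q y"
    by (auto simp: p_def q_def)
  have p_int: "integrable (M \<bind> N) p" and q_int: "integrable (M \<bind> N) q"
    unfolding p_def q_def using f_int by auto
  note P = integral_bind_nonneg[OF p_meas p_nonneg N M_nonempty p_int]
    and Q = integral_bind_nonneg[OF q_meas q_nonneg N M_nonempty q_int]
  have "integral\<^sup>L (M \<bind> N) f = integral\<^sup>L (M \<bind> N) p - integral\<^sup>L (M \<bind> N) q"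
    unfolding f_eq using p_int q_int by simp
  also have "\<dots> = (\<integral>x. integral\<^sup>L (N x) p - integral\<^sup>L (N x) q \<partial>M)"
    using P Q by (simp add: p_def q_def)
  also have "\<dots> = (\<integral>x. integral\<^sup>L (N x) f \<partial>M)"
  proof (rule integral_cong_AE)
    show "AE x in M. integral\<^sup>L (N x) p - integral\<^sup>L (N x) q = integral\<^sup>L (N x) f"
      using P(3) Q(3) by eventually_elim (simp add: f_eq)
  qed (use P(1) Q(1) in auto)
  finally show ?thesis .
qed

lemma second_moment_eq_mean_variance:
  fixes M :: "'a::euclidean_space measure"
  assumes M: "prob_space M"
    and mean_int: "integrable M (\<lambda>y. y)" and mean: "integral\<^sup>L M (\<lambda>y. y) = m"
    and var_int: "integrable M (\<lambda>y. (norm (y - m))\<^sup>2)"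
  shows "integrable M (\<lambda>y. (norm y)\<^sup>2)"
    and "(\<integral>y. (norm y)\<^sup>2 \<partial>M) = (norm m)\<^sup>2 + (\<integral>y. (norm (y - m))\<^sup>2 \<partial>M)"
proof -
  interpret prob_space M
    by (fact M)
  have expand: "(\<lambda>y. (norm y)\<^sup>2) = (\<lambda>y. (norm (y - m))\<^sup>2 + 2 * (y \<bullet> m) - (norm m)\<^sup>2)"
    by (simp add: fun_eq_iff power2_norm_eq_inner inner_diff_left inner_diff_right inner_commute
        algebra_simps)
  have "integrable M (\<lambda>y. y \<bullet> m)"
    using mean_int by auto
  then show "integrable M (\<lambda>y. (norm y)\<^sup>2)"
    unfolding expand using var_int by auto
  have "(\<integral>y. y \<bullet> m \<partial>M) = m \<bullet> m"
    using mean_int mean by simp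
  then show "(\<integral>y. (norm y)\<^sup>2 \<partial>M) = (norm m)\<^sup>2 + (\<integral>y. (norm (y - m))\<^sup>2 \<partial>M)"
    unfolding expand using var_int \<open>integrable M (\<lambda>y. y \<bullet> m)\<close>
    by (simp add: prob_space power2_norm_eq_inner)
qed

lemma (in finite_measure) square_integrable_norm_imp_integrable:
  fixes f :: "'a \<Rightarrow> 'b::{banach, second_countable_topology}"
  assumes f: "f \<in> borel_measurable M"
    and f_sq: "integrable M (\<lambda>x. (norm (f x))\<^sup>2)"
  shows "integrable M f"
proof (rule integrable_norm_cancel[OF _ f])
  show "integrable M (\<lambda>x. norm (f x))"
    using square_integrable_imp_integrable[of "\<lambda>x. norm (f x)"] f f_sq by simp
qed

lemma unbiased_compressorD:
  assumes "unbiased_compressor C \<omega>"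
  shows "C \<in> borel \<rightarrow>\<^sub>M prob_algebra borel"
    and "prob_space (C x)" and "sets (C x) = sets borel"
    and "integrable (C x) (\<lambda>y. y)" and "integral\<^sup>L (C x) (\<lambda>y. y) = x"
    and "integrable (C x) (\<lambda>y. (norm (y - x))\<^sup>2)"
    and "(\<integral>y. (norm (y - x))\<^sup>2 \<partial>C x) \<le> \<omega> * (norm x)\<^sup>2"
proof -
  show C: "C \<in> borel \<rightarrow>\<^sub>M prob_algebra borel"
    using assms by (simp add: unbiased_compressor_def)
  have "C x \<in> space (prob_algebra borel)"
    using measurable_space[OF C] by simp
  then show "prob_space (C x)" "sets (C x) = sets borel"
    by (auto simp: space_prob_algebra)
  show "integrable (C x) (\<lambda>y. y)" "integral\<^sup>L (C x) (\<lambda>y. y) = x"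
    "integrable (C x) (\<lambda>y. (norm (y - x))\<^sup>2)"
    "(\<integral>y. (norm (y - x))\<^sup>2 \<partial>C x) \<le> \<omega> * (norm x)\<^sup>2"
    using assms by (simp_all add: unbiased_compressor_def)
qed

lemma unbiased_compressor_second_moment:
  assumes C: "unbiased_compressor C \<omega>"
  shows "integrable (C x) (\<lambda>y. (norm y)\<^sup>2)"
    and "(\<integral>y. (norm y)\<^sup>2 \<partial>C x) \<le> (1 + \<omega>) * (norm x)\<^sup>2"
proof -
  note bias_variance = second_moment_eq_mean_variance[OF unbiased_compressorD(2,4-6)[OF C]]
  show "integrable (C x) (\<lambda>y. (norm y)\<^sup>2)"
    by (fact bias_variance(1))
  show "(\<integral>y. (norm y)\<^sup>2 \<partial>C x) \<le> (1 + \<omega>) * (norm x)\<^sup>2"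
    using bias_variance(2) unbiased_compressorD(7)[OF C, of x] by (simp add: algebra_simps)
qed

lemma
  assumes M: "prob_space M" "sets M = sets borel" and C: "unbiased_compressor C \<omega>"
  shows prob_space_bind_compressor: "prob_space (M \<bind> C)"
    and sets_bind_compressor: "sets (M \<bind> C) = sets borel"
    and measurable_compressor_subprob: "C \<in> M \<rightarrow>\<^sub>M subprob_algebra borel"
proof -
  have M_space: "M \<in> space (prob_algebra M)"
    using M by (simp add: space_prob_algebra)
  have C_M: "C \<in> M \<rightarrow>\<^sub>M prob_algebra borel"
    using unbiased_compressorD(1)[OF C] by (simp add: measurable_cong_sets[OF M(2) refl])
  show "prob_space (M \<bind> C)" "sets (M \<bind> C) = sets borel"
    using prob_space_bind'[OF M_space C_M] sets_bind'[OF M_space C_M] by auto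
  show "C \<in> M \<rightarrow>\<^sub>M subprob_algebra borel"
    using C_M by (rule measurable_prob_algebraD)
qed

lemma second_moment_bind_compressor:
  fixes M :: "'a::euclidean_space measure"
  assumes M: "prob_space M" "sets M = sets borel"
    and C: "unbiased_compressor C \<omega>" and \<omega>: "0 \<le> \<omega>"
    and M_sq: "integrable M (\<lambda>x. (norm x)\<^sup>2)"
  shows "integrable (M \<bind> C) (\<lambda>y. (norm y)\<^sup>2)"
    and "(\<integral>y. (norm y)\<^sup>2 \<partial>(M \<bind> C)) \<le> (1 + \<omega>) * (\<integral>x. (norm x)\<^sup>2 \<partial>M)"
proof -
  note C_M[measurable] = measurable_compressor_subprob[OF M C]
  have sq_measurable: "(\<lambda>y. (norm y)\<^sup>2) \<in> borel_measurable (M \<bind> C)"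
    by (simp add: measurable_cong_sets[OF sets_bind_compressor[OF M C] refl])
  have inner: "(\<integral>\<^sup>+y. (norm y)\<^sup>2 \<partial>C x) \<le> (1 + \<omega>) * (norm x)\<^sup>2" for x
    using unbiased_compressor_second_moment[OF C, of x]
    by (simp add: nn_integral_eq_integral ennreal_leI)
  have "(\<integral>\<^sup>+y. (norm y)\<^sup>2 \<partial>(M \<bind> C)) = (\<integral>\<^sup>+x. \<integral>\<^sup>+y. (norm y)\<^sup>2 \<partial>C x \<partial>M)"
    by (rule nn_integral_bind[OF _ C_M]) measurable
  also have "\<dots> \<le> (\<integral>\<^sup>+x. (1 + \<omega>) * (norm x)\<^sup>2 \<partial>M)"
    by (intro nn_integral_mono inner)
  also have "\<dots> = (1 + \<omega>) * (\<integral>x. (norm x)\<^sup>2 \<partial>M)"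
    using M_sq \<omega> by (subst nn_integral_eq_integral) auto
  finally have nn_bound: "(\<integral>\<^sup>+y. (norm y)\<^sup>2 \<partial>(M \<bind> C)) \<le> (1 + \<omega>) * (\<integral>x. (norm x)\<^sup>2 \<partial>M)" .
  then show "integrable (M \<bind> C) (\<lambda>y. (norm y)\<^sup>2)"
    using sq_measurable by (intro integrableI_nonneg) (auto simp: order.strict_trans1)
  have "(\<integral>y. (norm y)\<^sup>2 \<partial>(M \<bind> C)) = enn2real (\<integral>\<^sup>+y. (norm y)\<^sup>2 \<partial>(M \<bind> C))"
    using sq_measurable by (intro integral_eq_nn_integral) auto
  also have "\<dots> \<le> (1 + \<omega>) * (\<integral>x. (norm x)\<^sup>2 \<partial>M)"
    using nn_bound \<omega> by (intro enn2real_leI) auto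
  finally show "(\<integral>y. (norm y)\<^sup>2 \<partial>(M \<bind> C)) \<le> (1 + \<omega>) * (\<integral>x. (norm x)\<^sup>2 \<partial>M)" .
qed

lemma mean_bind_compressor:
  fixes M :: "'a::euclidean_space measure"
  assumes M: "prob_space M" "sets M = sets borel" and C: "unbiased_compressor C \<omega>"
    and M_int: "integrable M (\<lambda>x. x)" and bind_int: "integrable (M \<bind> C) (\<lambda>y. y)"
  shows "(\<integral>y. y \<partial>(M \<bind> C)) = (\<integral>x. x \<partial>M)"
proof (rule euclidean_eqI)
  fix e :: 'a
  have "(\<integral>y. y \<partial>(M \<bind> C)) \<bullet> e = (\<integral>y. y \<bullet> e \<partial>(M \<bind> C))"
    using bind_int by simp
  also have "\<dots> = (\<integral>x. (\<integral>y. y \<bullet> e \<partial>C x) \<partial>M)"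
  proof (rule integral_bind[OF _ measurable_compressor_subprob[OF M C] prob_space.not_empty[OF M(1)]])
    show "(\<lambda>y. y \<bullet> e) \<in> borel_measurable borel"
      by simp
    show "integrable (M \<bind> C) (\<lambda>y. y \<bullet> e)"
      using bind_int by (rule integrable_inner_left)
  qed
  also have "\<dots> = (\<integral>x. x \<bullet> e \<partial>M)"
    using unbiased_compressorD(4,5)[OF C] by (simp only: integral_inner_left)
  also have "\<dots> = (\<integral>x. x \<partial>M) \<bullet> e"
    using M_int by simp
  finally show "(\<integral>y. y \<partial>(M \<bind> C)) \<bullet> e = (\<integral>x. x \<partial>M) \<bullet> e" .
qed

lemma moments_bind_compressor:
  fixes M :: "'a::euclidean_space measure"
  assumes M: "prob_space M" "sets M = sets borel"
    and M_int: "integrable M (\<lambda>x. x)" and mean: "(\<integral>x. x \<partial>M) = G"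
    and var_int: "integrable M (\<lambda>x. (norm (x - G))\<^sup>2)"
    and var: "(\<integral>x. (norm (x - G))\<^sup>2 \<partial>M) \<le> s"
    and C: "unbiased_compressor C \<omega>" and \<omega>: "0 \<le> \<omega>"
  shows "prob_space (M \<bind> C)" and "sets (M \<bind> C) = sets borel"
    and "integrable (M \<bind> C) (\<lambda>y. (norm y)\<^sup>2)"
    and "(\<integral>y. y \<partial>(M \<bind> C)) = G"
    and "(\<integral>y. (norm y)\<^sup>2 \<partial>(M \<bind> C)) \<le> (1 + \<omega>) * ((norm G)\<^sup>2 + s)"
proof -
  note bias_variance = second_moment_eq_mean_variance[OF M(1) M_int mean var_int]
  note bind_sq = second_moment_bind_compressor[OF M C \<omega> bias_variance(1)]
  show "prob_space (M \<bind> C)" "sets (M \<bind> C) = sets borel"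
    by (fact prob_space_bind_compressor[OF M C] sets_bind_compressor[OF M C])+
  show "integrable (M \<bind> C) (\<lambda>y. (norm y)\<^sup>2)"
    by (fact bind_sq(1))
  have "integrable (M \<bind> C) (\<lambda>y. y)"
  proof (rule finite_measure.square_integrable_norm_imp_integrable)
    show "finite_measure (M \<bind> C)"
      using prob_space_bind_compressor[OF M C] by (rule prob_space.finite_measure)
  qed (simp_all add: measurable_cong_sets[OF sets_bind_compressor[OF M C] refl] bind_sq(1))
  then show "(\<integral>y. y \<partial>(M \<bind> C)) = G"
    using mean_bind_compressor[OF M C M_int] mean by simp
  show "(\<integral>y. (norm y)\<^sup>2 \<partial>(M \<bind> C)) \<le> (1 + \<omega>) * ((norm G)\<^sup>2 + s)"
    using bind_sq(2) bias_variance(2) var \<omega> by (smt (verit) mult_left_mono)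
qed

lemma integral_PiM_component:
  fixes f :: "'a \<Rightarrow> 'b::{banach, second_countable_topology}"
  assumes M: "\<And>l. l \<in> I \<Longrightarrow> prob_space (M l)" and i: "i \<in> I"
    and f: "f \<in> borel_measurable (M i)"
  shows "integrable (Pi\<^sub>M I M) (\<lambda>x. f (x i)) \<longleftrightarrow> integrable (M i) f"
    and "(\<integral>x. f (x i) \<partial>Pi\<^sub>M I M) = integral\<^sup>L (M i) f"
proof -
  have component: "(\<lambda>x. x i) \<in> Pi\<^sub>M I M \<rightarrow>\<^sub>M M i"
    using i by (rule measurable_component_singleton)
  show "integrable (Pi\<^sub>M I M) (\<lambda>x. f (x i)) \<longleftrightarrow> integrable (M i) f"
    using integrable_distr_eq[OF component f]
    by (simp only: distr_PiM_component[where M=M, OF M i] eq_commute)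
  show "(\<integral>x. f (x i) \<partial>Pi\<^sub>M I M) = integral\<^sup>L (M i) f"
    using integral_distr[OF component f]
    by (simp only: distr_PiM_component[where M=M, OF M i] eq_commute)
qed

lemma integral_PiM_mult_components:
  fixes f h :: "'a \<Rightarrow> real"
  assumes M: "\<And>l. l \<in> I \<Longrightarrow> prob_space (M l)"
    and I: "finite I" "i \<in> I" "j \<in> I" "i \<noteq> j"
    and f: "integrable (M i) f" and h: "integrable (M j) h"
  shows "integrable (Pi\<^sub>M I M) (\<lambda>x. f (x i) * h (x j))"
    and "(\<integral>x. f (x i) * h (x j) \<partial>Pi\<^sub>M I M) = integral\<^sup>L (M i) f * integral\<^sup>L (M j) h"
proof -
  \<comment> \<open>The factors outside \<open>I\<close> do not matter; replacing them by \<open>M i\<close> gives a product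
    of probability spaces.\<close>
  define M' where "M' l = (if l \<in> I then M l else M i)" for l
  have M'_prob: "prob_space (M' l)" for l
    using M I(2) by (simp add: M'_def)
  interpret product_prob_space M' I
    by (simp add: product_prob_space_def product_prob_space_axioms_def product_sigma_finite_def
        prob_space_imp_sigma_finite M'_prob)
  have PiM_eq: "Pi\<^sub>M I M' = Pi\<^sub>M I M"
    by (rule PiM_cong) (auto simp: M'_def)
  define u where "u l = (if l = i then f else if l = j then h else (\<lambda>_. 1))" for l
  have u_int: "integrable (M' l) (u l)" if "l \<in> I" for l
    using f h that I
      prob_space.finite_measure[OF M'_prob, THEN finite_measure.integrable_const, of l "1::real"]
    by (simp add: u_def M'_def)
  have u_prod: "(\<Prod>l\<in>I. u l (x l)) = f (x i) * h (x j)" for x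
  proof -
    have "(\<Prod>l\<in>I. u l (x l)) = (\<Prod>l\<in>{i, j}. u l (x l))"
      using I by (intro prod.mono_neutral_right) (auto simp: u_def)
    then show ?thesis
      using I(4) by (simp add: u_def)
  qed
  have u_prod_integral: "(\<Prod>l\<in>I. integral\<^sup>L (M' l) (u l)) = integral\<^sup>L (M i) f * integral\<^sup>L (M j) h"
  proof -
    have "(\<Prod>l\<in>I. integral\<^sup>L (M' l) (u l)) = (\<Prod>l\<in>{i, j}. integral\<^sup>L (M' l) (u l))"
      using I by (intro prod.mono_neutral_right) (auto simp: u_def M.prob_space)
    then show ?thesis
      using I by (simp add: u_def M'_def)
  qed
  show "integrable (Pi\<^sub>M I M) (\<lambda>x. f (x i) * h (x j))"
    using product_integrable_prod[OF I(1) u_int] by (simp add: u_prod PiM_eq)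
  show "(\<integral>x. f (x i) * h (x j) \<partial>Pi\<^sub>M I M) = integral\<^sup>L (M i) f * integral\<^sup>L (M j) h"
    using product_integral_prod[OF I(1) u_int] by (simp add: u_prod u_prod_integral PiM_eq)
qed

lemma integral_PiM_inner_components:
  fixes M :: "'i \<Rightarrow> 'a::euclidean_space measure"
  assumes M: "\<And>l. l \<in> I \<Longrightarrow> prob_space (M l)"
    and I: "finite I" "i \<in> I" "j \<in> I" "i \<noteq> j"
    and mean_i: "integrable (M i) (\<lambda>y. y)" and mean_j: "integrable (M j) (\<lambda>y. y)"
  shows "integrable (Pi\<^sub>M I M) (\<lambda>x. x i \<bullet> x j)"
    and "(\<integral>x. x i \<bullet> x j \<partial>Pi\<^sub>M I M) = (\<integral>y. y \<partial>M i) \<bullet> (\<integral>y. y \<partial>M j)"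
proof -
  have coordinate: "integrable (Pi\<^sub>M I M) (\<lambda>x. (x i \<bullet> e) * (x j \<bullet> e))"
    "(\<integral>x. (x i \<bullet> e) * (x j \<bullet> e) \<partial>Pi\<^sub>M I M) = ((\<integral>y. y \<partial>M i) \<bullet> e) * ((\<integral>y. y \<partial>M j) \<bullet> e)"
    for e :: 'a
    using integral_PiM_mult_components[where M=M and f="\<lambda>y. y \<bullet> e" and h="\<lambda>y. y \<bullet> e",
        OF M I integrable_inner_left[OF mean_i] integrable_inner_left[OF mean_j]] mean_i mean_j
    by simp_all
  have expand: "(\<lambda>x. x i \<bullet> x j) = (\<lambda>x. \<Sum>e\<in>Basis. (x i \<bullet> e) * (x j \<bullet> e))"
    by (rule ext) (rule euclidean_inner)
  show "integrable (Pi\<^sub>M I M) (\<lambda>x. x i \<bullet> x j)"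
    unfolding expand by (intro Bochner_Integration.integrable_sum coordinate(1))
  have "(\<integral>x. x i \<bullet> x j \<partial>Pi\<^sub>M I M) = (\<Sum>e\<in>Basis. \<integral>x. (x i \<bullet> e) * (x j \<bullet> e) \<partial>Pi\<^sub>M I M)"
    unfolding expand by (intro Bochner_Integration.integral_sum coordinate(1))
  also have "\<dots> = (\<integral>y. y \<partial>M i) \<bullet> (\<integral>y. y \<partial>M j)"
    unfolding coordinate(2) by (rule euclidean_inner[symmetric])
  finally show "(\<integral>x. x i \<bullet> x j \<partial>Pi\<^sub>M I M) = (\<integral>y. y \<partial>M i) \<bullet> (\<integral>y. y \<partial>M j)" .
qed

lemma integral_norm_sum_PiM:
  fixes M :: "'i \<Rightarrow> 'a::euclidean_space measure"
  assumes M: "\<And>i. i \<in> I \<Longrightarrow> prob_space (M i)"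
    and M_borel: "\<And>i. i \<in> I \<Longrightarrow> sets (M i) = sets borel"
    and sq_int: "\<And>i. i \<in> I \<Longrightarrow> integrable (M i) (\<lambda>y. (norm y)\<^sup>2)" and I: "finite I"
  shows "integrable (Pi\<^sub>M I M) (\<lambda>x. (norm (\<Sum>i\<in>I. x i))\<^sup>2)"
    and "(\<integral>x. (norm (\<Sum>i\<in>I. x i))\<^sup>2 \<partial>Pi\<^sub>M I M) =
      (norm (\<Sum>i\<in>I. \<integral>y. y \<partial>M i))\<^sup>2 + (\<Sum>i\<in>I. (\<integral>y. (norm y)\<^sup>2 \<partial>M i) - (norm (\<integral>y. y \<partial>M i))\<^sup>2)"
proof -
  define \<mu> where "\<mu> i = (\<integral>y. y \<partial>M i)" for i
  define V where "V i = (\<integral>y. (norm y)\<^sup>2 \<partial>M i) - (norm (\<mu> i))\<^sup>2" for i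
  have mean_int: "integrable (M i) (\<lambda>y. y)" if "i \<in> I" for i
  proof (rule finite_measure.square_integrable_norm_imp_integrable)
    show "finite_measure (M i)"
      using M[OF that] by (rule prob_space.finite_measure)
    show "(\<lambda>y. y) \<in> borel_measurable (M i)"
      by (simp add: measurable_cong_sets[OF M_borel[OF that] refl])
  qed (fact sq_int[OF that])
  have diag: "integrable (Pi\<^sub>M I M) (\<lambda>x. x i \<bullet> x i)"
    "(\<integral>x. x i \<bullet> x i \<partial>Pi\<^sub>M I M) = (\<integral>y. (norm y)\<^sup>2 \<partial>M i)" if "i \<in> I" for i
  proof -
    have "(\<lambda>y. (norm y)\<^sup>2) \<in> borel_measurable (M i)"
      by (simp add: measurable_cong_sets[OF M_borel[OF that] refl])
    note component = integral_PiM_component[where M=M, OF M that this]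
    show "integrable (Pi\<^sub>M I M) (\<lambda>x. x i \<bullet> x i)"
      "(\<integral>x. x i \<bullet> x i \<partial>Pi\<^sub>M I M) = (\<integral>y. (norm y)\<^sup>2 \<partial>M i)"
      using component sq_int[OF that] by (simp_all add: power2_norm_eq_inner)
  qed
  have pair_int: "integrable (Pi\<^sub>M I M) (\<lambda>x. x i \<bullet> x j)" if "i \<in> I" "j \<in> I" for i j
    using diag integral_PiM_inner_components[where M=M, OF M I that _ mean_int mean_int] that
    by (cases "i = j") auto
  have pair: "(\<integral>x. x i \<bullet> x j \<partial>Pi\<^sub>M I M) = \<mu> i \<bullet> \<mu> j + (if i = j then V i else 0)"
    if "i \<in> I" "j \<in> I" for i j
    using diag integral_PiM_inner_components[where M=M, OF M I that _ mean_int mean_int] that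
    by (cases "i = j") (auto simp: \<mu>_def V_def power2_norm_eq_inner)
  have expand: "(\<lambda>x. (norm (\<Sum>i\<in>I. x i))\<^sup>2) = (\<lambda>x. \<Sum>i\<in>I. \<Sum>j\<in>I. x i \<bullet> x j)"
    by (simp only: power2_norm_eq_inner inner_sum_left) (simp only: inner_sum_right)
  show "integrable (Pi\<^sub>M I M) (\<lambda>x. (norm (\<Sum>i\<in>I. x i))\<^sup>2)"
    unfolding expand by (intro Bochner_Integration.integrable_sum pair_int)
  have "(\<integral>x. (norm (\<Sum>i\<in>I. x i))\<^sup>2 \<partial>Pi\<^sub>M I M) = (\<Sum>i\<in>I. \<Sum>j\<in>I. \<integral>x. x i \<bullet> x j \<partial>Pi\<^sub>M I M)"
    unfolding expand
    by (simp add: Bochner_Integration.integral_sum Bochner_Integration.integrable_sum pair_int)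
  also have "\<dots> = (\<Sum>i\<in>I. \<Sum>j\<in>I. \<mu> i \<bullet> \<mu> j + (if i = j then V i else 0))"
    by (intro sum.cong refl) (simp add: pair)
  also have "\<dots> = (\<Sum>i\<in>I. \<Sum>j\<in>I. \<mu> i \<bullet> \<mu> j) + (\<Sum>i\<in>I. V i)"
    using I by (simp add: sum.distrib)
  also have "\<dots> = (norm (\<Sum>i\<in>I. \<mu> i))\<^sup>2 + (\<Sum>i\<in>I. V i)"
    by (simp only: power2_norm_eq_inner inner_sum_left) (simp only: inner_sum_right)
  finally show "(\<integral>x. (norm (\<Sum>i\<in>I. x i))\<^sup>2 \<partial>Pi\<^sub>M I M) =
      (norm (\<Sum>i\<in>I. \<integral>y. y \<partial>M i))\<^sup>2 + (\<Sum>i\<in>I. (\<integral>y. (norm y)\<^sup>2 \<partial>M i) - (norm (\<integral>y. y \<partial>M i))\<^sup>2)"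
    unfolding \<mu>_def V_def .
qed

lemma ghost_cond_err_le:
  assumes C: "unbiased_compressor Cdwn \<omega>" and \<omega>: "0 \<le> \<omega>"
    and avg_int: "integrable (uplink_law N g Cup k w) (\<lambda>ys. (norm (avg N ys))\<^sup>2)"
  shows "ghost_cond_err \<gamma> N g Cup Cdwn k w
    \<le> \<gamma>\<^sup>2 * \<omega> * (\<integral>ys. (norm (avg N ys))\<^sup>2 \<partial>uplink_law N g Cup k w)"
proof -
  let ?P = "uplink_law N g Cup k w"
  define err where "err v = (\<integral>z. (norm (\<gamma> *\<^sub>R (z - v)))\<^sup>2 \<partial>Cdwn v)" for v
  have err_le: "err v \<le> \<gamma>\<^sup>2 * \<omega> * (norm v)\<^sup>2" for v
  proof -
    have "err v = \<gamma>\<^sup>2 * (\<integral>z. (norm (z - v))\<^sup>2 \<partial>Cdwn v)"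
      by (simp add: err_def power_mult_distrib)
    also have "\<dots> \<le> \<gamma>\<^sup>2 * (\<omega> * (norm v)\<^sup>2)"
      using unbiased_compressorD(7)[OF C] by (intro mult_left_mono) auto
    finally show ?thesis
      by (simp add: mult.assoc)
  qed
  have "ghost_cond_err \<gamma> N g Cup Cdwn k w = (\<integral>ys. err (avg N ys) \<partial>?P)"
    unfolding ghost_cond_err_def err_def ..
  also have "\<dots> \<le> (\<integral>ys. \<gamma>\<^sup>2 * \<omega> * (norm (avg N ys))\<^sup>2 \<partial>?P)"
  proof (cases "integrable ?P (\<lambda>ys. err (avg N ys))")
    case True
    then show ?thesis
      using avg_int err_le by (intro integral_mono) auto
  next
    case False
    \<comment> \<open>Then the left-hand side is the junk value 0 of the Bochner integral.\<close>
    then show ?thesis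
      using \<omega> by (simp add: not_integrable_integral_eq)
  qed
  also have "\<dots> = \<gamma>\<^sup>2 * \<omega> * (\<integral>ys. (norm (avg N ys))\<^sup>2 \<partial>?P)"
    by simp
  finally show ?thesis .
qed

lemma uplink_avg_second_moment:
  fixes g :: "nat \<Rightarrow> nat \<Rightarrow> 'a::euclidean_space \<Rightarrow> 'a measure"
  assumes N: "0 < N" and C: "unbiased_compressor Cup \<omega>" "0 \<le> \<omega>"
    and law: "\<And>i. i < N \<Longrightarrow> prob_space (g k i w) \<and> sets (g k i w) = sets borel"
    and mean: "\<And>i. i < N \<Longrightarrow> integrable (g k i w) (\<lambda>x. x) \<and> integral\<^sup>L (g k i w) (\<lambda>x. x) = G"
    and var: "\<And>i. i < N \<Longrightarrow>
      integrable (g k i w) (\<lambda>x. (norm (x - G))\<^sup>2) \<and> (\<integral>x. (norm (x - G))\<^sup>2 \<partial>g k i w) \<le> s"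
  shows "integrable (uplink_law N g Cup k w) (\<lambda>ys. (norm (avg N ys))\<^sup>2)"
    and "(\<integral>ys. (norm (avg N ys))\<^sup>2 \<partial>uplink_law N g Cup k w)
      \<le> (1 + \<omega> / N) * (norm G)\<^sup>2 + (1 + \<omega>) * s / N"
proof -
  let ?P = "uplink_law N g Cup k w"
  define A where "A = (1 + \<omega>) * ((norm G)\<^sup>2 + s)"
  note Y = moments_bind_compressor[OF law[THEN conjunct1] law[THEN conjunct2]
      mean[THEN conjunct1] mean[THEN conjunct2] var[THEN conjunct1] var[THEN conjunct2] C]
  note sum = integral_norm_sum_PiM[of "{..<N}" "\<lambda>i. g k i w \<bind> Cup", folded uplink_law_def]
  have sum_int: "integrable ?P (\<lambda>ys. (norm (\<Sum>i<N. ys i))\<^sup>2)"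
    using sum(1) Y(1-3) by simp
  have "(\<integral>ys. (norm (\<Sum>i<N. ys i))\<^sup>2 \<partial>?P)
      = (N * norm G)\<^sup>2 + (\<Sum>i<N. (\<integral>y. (norm y)\<^sup>2 \<partial>(g k i w \<bind> Cup)) - (norm G)\<^sup>2)"
    using sum(2) Y(1-4) by (simp add: sum_constant_scaleR)
  also have "\<dots> \<le> (N * norm G)\<^sup>2 + N * (A - (norm G)\<^sup>2)"
    using sum_mono[of "{..<N}" _ "\<lambda>_. A - (norm G)\<^sup>2"] Y(5) by (simp add: A_def)
  finally have sum_le:
    "(\<integral>ys. (norm (\<Sum>i<N. ys i))\<^sup>2 \<partial>?P) \<le> (N * norm G)\<^sup>2 + N * (A - (norm G)\<^sup>2)" .
  have avg_sq: "(\<lambda>ys. (norm (avg N ys))\<^sup>2) = (\<lambda>ys. (1 / N)\<^sup>2 * (norm (\<Sum>i<N. ys i))\<^sup>2)"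
    by (simp add: avg_def power_mult_distrib power_divide)
  show "integrable ?P (\<lambda>ys. (norm (avg N ys))\<^sup>2)"
    unfolding avg_sq using sum_int by simp
  have "(\<integral>ys. (norm (avg N ys))\<^sup>2 \<partial>?P) \<le> (1 / N)\<^sup>2 * ((N * norm G)\<^sup>2 + N * (A - (norm G)\<^sup>2))"
    unfolding avg_sq using sum_le by (simp add: mult_left_mono)
  also have "\<dots> = (1 + \<omega> / N) * (norm G)\<^sup>2 + (1 + \<omega>) * s / N"
    using N by (simp add: A_def field_simps power2_eq_square)
  finally show "(\<integral>ys. (norm (avg N ys))\<^sup>2 \<partial>?P) \<le> (1 + \<omega> / N) * (norm G)\<^sup>2 + (1 + \<omega>) * s / N" .
qed

theorem mainTheorem6:
  fixes F :: "'a::euclidean_space \<Rightarrow> real"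
    and gradF :: "'a \<Rightarrow> 'a"
    and H :: "'a \<Rightarrow> 'a \<Rightarrow>\<^sub>L 'a"
    and g :: "nat \<Rightarrow> nat \<Rightarrow> 'a \<Rightarrow> 'a measure"
    and Cup Cdwn :: "'a \<Rightarrow> 'a measure"
    and N b :: nat
    and \<gamma> L \<sigma> \<omega>up \<omega>dwn :: real
  assumes N: "N \<ge> 1"
    and b: "b \<ge> 1"
    and A1_up: "\<omega>up > 0" "unbiased_compressor Cup \<omega>up"
    and A1_dwn: "\<omega>dwn > 0" "unbiased_compressor Cdwn \<omega>dwn"
    and A2_grad: "\<And>w. (F has_derivative (\<lambda>h. gradF w \<bullet> h)) (at w)"
    and A2_hess: "\<And>w. (gradF has_derivative blinfun_apply (H w)) (at w)"
    and A2_cont: "continuous_on UNIV H"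
    and A2_smooth: "\<And>x y. norm (gradF x - gradF y) \<le> L * norm (x - y)"
    and oracle_law: "\<And>k i w. i < N \<Longrightarrow> prob_space (g k i w) \<and> sets (g k i w) = sets borel"
    and oracle_unbiased: "\<And>k i w. i < N \<Longrightarrow>
          integrable (g k i w) (\<lambda>x. x) \<and> integral\<^sup>L (g k i w) (\<lambda>x. x) = gradF w"
    and A4: "\<And>k i w. i < N \<Longrightarrow>
          integrable (g k i w) (\<lambda>x. (norm (x - gradF w))\<^sup>2) \<and>
          (\<integral>x. (norm (x - gradF w))\<^sup>2 \<partial>g k i w) \<le> \<sigma>\<^sup>2 / real b"
  shows "\<forall>k\<ge>1. \<forall>w.
     ghost_cond_err \<gamma> N g Cup Cdwn k w
       \<le> \<gamma>\<^sup>2 * \<omega>dwn * (1 + \<omega>up / real N) * (norm (gradF w))\<^sup>2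
         + \<gamma>\<^sup>2 * \<omega>dwn * (1 + \<omega>up) * \<sigma>\<^sup>2 / (real N * real b)"
proof (intro allI impI)
  fix k w
  note avg_moment = uplink_avg_second_moment[where g = g and N = N and k = k and w = w
      and G = "gradF w" and s = "\<sigma>\<^sup>2 / real b",
      OF _ A1_up(2) less_imp_le[OF A1_up(1)] oracle_law oracle_unbiased A4]
  have "ghost_cond_err \<gamma> N g Cup Cdwn k w
      \<le> \<gamma>\<^sup>2 * \<omega>dwn * (\<integral>ys. (norm (avg N ys))\<^sup>2 \<partial>uplink_law N g Cup k w)"
    using N by (intro ghost_cond_err_le A1_dwn(2) less_imp_le[OF A1_dwn(1)] avg_moment(1)) auto
  also have "\<dots> \<le> \<gamma>\<^sup>2 * \<omega>dwn *
      ((1 + \<omega>up / real N) * (norm (gradF w))\<^sup>2 + (1 + \<omega>up) * (\<sigma>\<^sup>2 / real b) / real N)"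
    using N A1_dwn(1) by (intro mult_left_mono avg_moment(2)) auto
  also have "\<dots> = \<gamma>\<^sup>2 * \<omega>dwn * (1 + \<omega>up / real N) * (norm (gradF w))\<^sup>2
         + \<gamma>\<^sup>2 * \<omega>dwn * (1 + \<omega>up) * \<sigma>\<^sup>2 / (real N * real b)"
    by (simp add: field_simps)
  finally show "ghost_cond_err \<gamma> N g Cup Cdwn k w
       \<le> \<gamma>\<^sup>2 * \<omega>dwn * (1 + \<omega>up / real N) * (norm (gradF w))\<^sup>2
         + \<gamma>\<^sup>2 * \<omega>dwn * (1 + \<omega>up) * \<sigma>\<^sup>2 / (real N * real b)" .
qed

end
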